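(* Let $m,n\ge 1$ and let $D$ be the $mn\times mn$ Manhattan distance matrix of a rectangular grid with $m$ rows and $n$ columns, i.e. for $s=i+n(j-1)$ and $t=k+n(l-1)$ with $i,k\in\{1,\dots,n\}$ and $j,l\in\{1,\dots,m\}$, $d_{st}=|i-k|+|j-l|$. Then $D$ is a spherical Euclidean distance matrix of embedding dimension $n+m-2$, and the points that generate $D$ lie on a hypersphere of radius $\rho=\tfrac12(n+m-2)^{1/2}$.
   Context: An $N\times N$ matrix $D=(d_{ij})$ is a Euclidean distance matrix (EDM) if there exist points $p^1,\dots,p^N$ in some Euclidean space with $d_{ij}=\|p^i-p^j\|^2$ for all $i,j$; the dimension of their affine span is the embedding dimension $r$ of $D$. An EDM is spherical if it is generated by points lying on a hypersphere. Convention: the generating points are taken in $\mathbb{R}^r$ ($r$ the embedding dimension), and the hypersphere is a hypersphere in $\mathbb{R}^r$. *)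

theory Defs
  imports "HOL-Analysis.Analysis" "HOL-Library.Function_Algebras"
begin

text \<open>Euclidean r-space R^r is modelled as the set of real sequences
  (nat to real) vanishing from index r on; coordinates are indexed 0..r-1.
  The dimension r varies inside the statement, so a type-indexed space
  cannot be used (it would also exclude r = 0).\<close>

definition R_space :: "nat \<Rightarrow> (nat \<Rightarrow> real) set" where
  "R_space r = {x. \<forall>i. r \<le> i \<longrightarrow> x i = 0}"

definition sq_dist :: "nat \<Rightarrow> (nat \<Rightarrow> real) \<Rightarrow> (nat \<Rightarrow> real) \<Rightarrow> real" where
  "sq_dist r x y = (\<Sum>i<r. (x i - y i)^2)"

definition euclid_dist :: "nat \<Rightarrow> (nat \<Rightarrow> real) \<Rightarrow> (nat \<Rightarrow> real) \<Rightarrow> real" where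
  "euclid_dist r x y = sqrt (sq_dist r x y)"

text \<open>Scalar multiplication on nat to real; the library's vector-space
  dimension vector_space.dim is taken with respect to it.\<close>
definition fscale :: "real \<Rightarrow> (nat \<Rightarrow> real) \<Rightarrow> (nat \<Rightarrow> real)" where
  "fscale c x = (\<lambda>i. c * x i)"

text \<open>Dimension of the affine span of a point set = dimension of the linear
  span of the difference vectors.\<close>
definition affine_span_dim :: "(nat \<Rightarrow> real) set \<Rightarrow> nat" where
  "affine_span_dim P = vector_space.dim fscale {x - y | x y. x \<in> P \<and> y \<in> P}"

text \<open>Points p 1, ..., p N in R^r generate the N x N matrix D
  (D is indexed by 1..N), i.e. D s t = squared distance of p s and p t.\<close>
definition generates_EDM ::
  "nat \<Rightarrow> nat \<Rightarrow> (nat \<Rightarrow> nat \<Rightarrow> real) \<Rightarrow> (nat \<Rightarrow> nat \<Rightarrow> real) \<Rightarrow> bool" where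
  "generates_EDM r N D p \<longleftrightarrow>
     (\<forall>s\<in>{1..N}. p s \<in> R_space r) \<and>
     (\<forall>s\<in>{1..N}. \<forall>t\<in>{1..N}. D s t = sq_dist r (p s) (p t))"

definition EDM_with_embedding_dim :: "nat \<Rightarrow> nat \<Rightarrow> (nat \<Rightarrow> nat \<Rightarrow> real) \<Rightarrow> bool" where
  "EDM_with_embedding_dim r N D \<longleftrightarrow>
     (\<exists>p. generates_EDM r N D p \<and> affine_span_dim (p ` {1..N}) = r)"

definition on_hypersphere :: "nat \<Rightarrow> nat \<Rightarrow> (nat \<Rightarrow> nat \<Rightarrow> real) \<Rightarrow> real \<Rightarrow> bool" where
  "on_hypersphere r N p \<rho> \<longleftrightarrow>
     (\<exists>c\<in>R_space r. \<forall>s\<in>{1..N}. euclid_dist r (p s) c = \<rho>)"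

definition spherical_EDM_with_embedding_dim :: "nat \<Rightarrow> nat \<Rightarrow> (nat \<Rightarrow> nat \<Rightarrow> real) \<Rightarrow> bool" where
  "spherical_EDM_with_embedding_dim r N D \<longleftrightarrow>
     (\<exists>p. generates_EDM r N D p \<and> affine_span_dim (p ` {1..N}) = r \<and>
          (\<exists>\<rho>. on_hypersphere r N p \<rho>))"

text \<open>Since (s-1) mod n = i-1 and (s-1) div n = j-1,
  this is the formula below (indices s, t range over 1..m*n).\<close>
definition grid_manhattan :: "nat \<Rightarrow> nat \<Rightarrow> nat \<Rightarrow> real" where
  "grid_manhattan n s t =
     \<bar>real ((s - 1) mod n) - real ((t - 1) mod n)\<bar> +
     \<bar>real ((s - 1) div n) - real ((t - 1) div n)\<bar>"

end

theory Submission
  imports Defs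
begin

text \<open>Embed the grid point in column \<open>i\<close> and row \<open>j\<close> (counted from 0) as the
  0/1 vector whose first \<open>n - 1\<close> coordinates are \<open>i\<close> ones followed by zeros and whose
  last \<open>m - 1\<close> coordinates are \<open>j\<close> ones followed by zeros.  The squared distance of two
  such vectors counts the coordinates where they differ, which is \<open>|i - k| + |j - l|\<close>;
  neighbours in a row or a column differ by a unit vector, so the affine span is all of
  \<open>\<real>\<^sup>n\<^sup>+\<^sup>m\<^sup>-\<^sup>2\<close>.  For the sphere: every grid point lies on a geodesic between the
  opposite corners \<open>a, b\<close>, i.e. \<open>D s a + D s b = D a b\<close>, and by Apollonius' identity this
  puts every generating point at squared distance \<open>D a b / 4\<close> from the midpoint of
  \<open>p a\<close> and \<open>p b\<close>, whichever generating points are chosen.\<close>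

interpretation fs: vector_space fscale
  by unfold_locales (auto simp: fscale_def fun_eq_iff algebra_simps)

definition unit_vec :: "nat \<Rightarrow> nat \<Rightarrow> real" where
  "unit_vec k = (\<lambda>i. if i = k then 1 else 0)"

definition unary_vec :: "nat \<Rightarrow> nat \<Rightarrow> real" where
  "unary_vec a = (\<lambda>k. if k < a then 1 else 0)"

definition append_vec :: "nat \<Rightarrow> (nat \<Rightarrow> real) \<Rightarrow> (nat \<Rightarrow> real) \<Rightarrow> nat \<Rightarrow> real" where
  "append_vec d x y = (\<lambda>k. if k < d then x k else y (k - d))"

lemma sum_fun_apply: "(sum f A) x = (\<Sum>a\<in>A. f a x)"
  by (induct A rule: infinite_finite_induct) auto

lemma inj_unit_vec: "inj unit_vec"
proof (rule injI)
  fix k l assume "unit_vec k = unit_vec l"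
  then have "unit_vec k k = unit_vec l k" by simp
  then show "k = l" by (simp add: unit_vec_def split: if_splits)
qed

lemma diff_in_R_space: "x \<in> R_space r \<Longrightarrow> y \<in> R_space r \<Longrightarrow> x - y \<in> R_space r"
  by (simp add: R_space_def)

lemma R_space_subset_span_unit_vecs: "R_space r \<subseteq> fs.span (unit_vec ` {..<r})"
proof
  fix x assume x: "x \<in> R_space r"
  have "x = (\<Sum>k<r. fscale (x k) (unit_vec k))"
  proof
    fix i
    have "(\<Sum>k<r. fscale (x k) (unit_vec k)) i = (\<Sum>k<r. if k = i then x i else 0)"
      unfolding sum_fun_apply by (rule sum.cong) (auto simp: fscale_def unit_vec_def)
    then show "x i = (\<Sum>k<r. fscale (x k) (unit_vec k)) i"
      using x by (cases "i < r") (simp_all add: R_space_def)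
  qed
  also have "\<dots> \<in> fs.span (unit_vec ` {..<r})"
    by (intro fs.span_sum fs.span_scale fs.span_base) auto
  finally show "x \<in> fs.span (unit_vec ` {..<r})" .
qed

lemma independent_unit_vecs:
  assumes "finite A"
  shows "fs.independent (unit_vec ` A)"
proof (rule fs.independent_if_scalars_zero)
  fix f x assume sum0: "(\<Sum>y\<in>unit_vec ` A. fscale (f y) y) = 0" and "x \<in> unit_vec ` A"
  then obtain k where "x = unit_vec k" by auto
  have "0 = (\<Sum>y\<in>unit_vec ` A. fscale (f y) y) k"
    using sum0 by simp
  also have "\<dots> = (\<Sum>y\<in>unit_vec ` A. if y = x then f y else 0)"
    unfolding sum_fun_apply
  proof (rule sum.cong)
    fix y assume "y \<in> unit_vec ` A"
    then obtain j where "y = unit_vec j" by auto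
    then show "fscale (f y) y k = (if y = x then f y else 0)"
      using \<open>x = unit_vec k\<close> inj_eq[OF inj_unit_vec, of j k]
      by (auto simp: fscale_def unit_vec_def)
  qed simp
  also have "\<dots> = f x"
    using \<open>x \<in> unit_vec ` A\<close> assms by (simp add: sum.delta')
  finally show "f x = 0" by simp
qed (use assms in simp)

lemma dim_eq_if_unit_vecs_subset:
  assumes "unit_vec ` {..<r} \<subseteq> S" and "S \<subseteq> R_space r"
  shows "fs.dim S = r"
proof (rule fs.dim_unique[OF assms(1)])
  show "S \<subseteq> fs.span (unit_vec ` {..<r})"
    using assms(2) R_space_subset_span_unit_vecs by blast
  show "fs.independent (unit_vec ` {..<r})"
    by (simp add: independent_unit_vecs)
  show "card (unit_vec ` {..<r}) = r"
    by (simp add: card_image inj_on_subset[OF inj_unit_vec])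
qed

lemma sum_lessThan_add: "(\<Sum>k<a + b. f k) = (\<Sum>k<a. f k) + (\<Sum>k<b. f (a + k :: nat))"
  by (induct b) (auto simp: add.assoc)

lemma sq_dist_append_vec:
  "sq_dist (d + e) (append_vec d x y) (append_vec d x' y') = sq_dist d x x' + sq_dist e y y'"
  unfolding sq_dist_def sum_lessThan_add by (simp add: append_vec_def)

lemma sq_dist_unary_vec:
  assumes "a \<le> N" and "b \<le> N"
  shows "sq_dist N (unary_vec a) (unary_vec b) = \<bar>real a - real b\<bar>"
proof -
  have "sq_dist N (unary_vec a) (unary_vec b) = (\<Sum>k<N. if k \<in> {min a b..<max a b} then 1 else 0)"
    unfolding sq_dist_def unary_vec_def by (rule sum.cong) auto
  also have "\<dots> = card ({..<N} \<inter> {min a b..<max a b})"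
    by (subst sum.inter_restrict[symmetric]) auto
  also have "{..<N} \<inter> {min a b..<max a b} = {min a b..<max a b}"
    using assms by auto
  finally show ?thesis by (auto simp: max_def min_def)
qed

lemma unary_vec_in_R_space: "a \<le> N \<Longrightarrow> unary_vec a \<in> R_space N"
  by (simp add: R_space_def unary_vec_def)

lemma append_vec_in_R_space: "y \<in> R_space e \<Longrightarrow> append_vec d x y \<in> R_space (d + e)"
  by (simp add: R_space_def append_vec_def)

lemma unary_vec_Suc_diff: "unary_vec (Suc a) - unary_vec a = unit_vec a"
  by (auto simp: unary_vec_def unit_vec_def fun_eq_iff)

lemma append_vec_diff:
  "append_vec d x y - append_vec d x' y' = append_vec d (x - x') (y - y')"
  by (simp add: append_vec_def fun_eq_iff)

lemma append_vec_unit_vec_left: "k < d \<Longrightarrow> append_vec d (unit_vec k) 0 = unit_vec k"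
  by (auto simp: append_vec_def unit_vec_def fun_eq_iff)

lemma append_vec_unit_vec_right: "append_vec d 0 (unit_vec l) = unit_vec (d + l)"
  by (auto simp: append_vec_def unit_vec_def fun_eq_iff)

lemma sq_dist_midpoint:
  "sq_dist r x (fscale (1/2) (y + z)) = sq_dist r x y / 2 + sq_dist r x z / 2 - sq_dist r y z / 4"
proof -
  have "sq_dist r x (fscale (1/2) (y + z))
      = (\<Sum>i<r. (x i - y i)^2 / 2 + (x i - z i)^2 / 2 - (y i - z i)^2 / 4)"
    unfolding sq_dist_def fscale_def by (rule sum.cong) (auto simp: power2_eq_square field_simps)
  then show ?thesis
    unfolding sq_dist_def by (simp add: sum_divide_distrib sum_subtractf sum.distrib)
qed

lemma on_hypersphere_if_geodesic:
  assumes gen: "generates_EDM r N D p" and a: "a \<in> {1..N}" and b: "b \<in> {1..N}"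
    and geodesic: "\<And>s. s \<in> {1..N} \<Longrightarrow> D s a + D s b = D a b"
  shows "on_hypersphere r N p (sqrt (D a b) / 2)"
  unfolding on_hypersphere_def
proof
  show "fscale (1/2) (p a + p b) \<in> R_space r"
    using gen a b by (auto simp: generates_EDM_def R_space_def fscale_def)
  show "\<forall>s\<in>{1..N}. euclid_dist r (p s) (fscale (1/2) (p a + p b)) = sqrt (D a b) / 2"
  proof
    fix s assume s: "s \<in> {1..N}"
    have "sq_dist r (p s) (fscale (1/2) (p a + p b)) = D s a / 2 + D s b / 2 - D a b / 4"
      unfolding sq_dist_midpoint using gen s a b by (simp add: generates_EDM_def)
    also have "\<dots> = D a b / 4"
      using geodesic[OF s] by simp
    finally have sq: "sq_dist r (p s) (fscale (1/2) (p a + p b)) = D a b / 4" .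
    have "sqrt 4 = (2 :: real)"
      by (rule real_sqrt_unique) simp_all
    then show "euclid_dist r (p s) (fscale (1/2) (p a + p b)) = sqrt (D a b) / 2"
      unfolding euclid_dist_def sq real_sqrt_divide by simp
  qed
qed

lemma grid_index_bounds:
  fixes m n s :: nat
  assumes "s \<in> {1..m * n}"
  shows "(s - 1) mod n \<le> n - 1" and "(s - 1) div n \<le> m - 1"
proof -
  have "s - 1 < m * n" and "0 < n" using assms by (auto intro: gr0I)
  then have "(s - 1) mod n < n" and "(s - 1) div n < m"
    by (simp_all add: less_mult_imp_div_less)
  then show "(s - 1) mod n \<le> n - 1" and "(s - 1) div n \<le> m - 1"
    by simp_all
qed

lemma grid_corner_index:
  fixes m n :: nat
  assumes "m \<ge> 1" and "n \<ge> 1"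
  shows "(m * n - 1) mod n = n - 1" and "(m * n - 1) div n = m - 1"
proof -
  have split: "m * n - 1 = (n - 1) + n * (m - 1)"
    using assms by (cases m; cases n) (auto simp: algebra_simps)
  show "(m * n - 1) mod n = n - 1"
    unfolding split mod_mult_self2 using assms by simp
  show "(m * n - 1) div n = m - 1"
    unfolding split using assms by (subst div_mult_self2) simp_all
qed

lemma grid_manhattan_corners:
  assumes "m \<ge> 1" and "n \<ge> 1"
  shows "grid_manhattan n 1 (m * n) = real (n + m - 2)"
  using grid_corner_index[OF assms] assms by (simp add: grid_manhattan_def of_nat_diff)

lemma grid_manhattan_geodesic:
  assumes "m \<ge> 1" and "n \<ge> 1" and s: "s \<in> {1..m * n}"
  shows "grid_manhattan n s 1 + grid_manhattan n s (m * n) = grid_manhattan n 1 (m * n)"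
  using grid_index_bounds[OF s] grid_corner_index[OF assms(1,2)] assms
  by (simp add: grid_manhattan_def of_nat_diff)

definition grid_point :: "nat \<Rightarrow> nat \<Rightarrow> nat \<Rightarrow> real" where
  "grid_point n s = append_vec (n - 1) (unary_vec ((s - 1) mod n)) (unary_vec ((s - 1) div n))"

lemma grid_dim_split: "(m :: nat) \<ge> 1 \<Longrightarrow> n \<ge> 1 \<Longrightarrow> n + m - 2 = (n - 1) + (m - 1)"
  by simp

lemma grid_point_in_R_space:
  assumes "m \<ge> 1" and "n \<ge> 1" and "s \<in> {1..m * n}"
  shows "grid_point n s \<in> R_space (n + m - 2)"
  unfolding grid_point_def grid_dim_split[OF assms(1,2)]
  by (intro append_vec_in_R_space unary_vec_in_R_space grid_index_bounds[OF assms(3)])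

lemma generates_EDM_grid_point:
  assumes "m \<ge> 1" and "n \<ge> 1"
  shows "generates_EDM (n + m - 2) (m * n) (grid_manhattan n) (grid_point n)"
  unfolding generates_EDM_def
proof (intro conjI ballI)
  fix s assume "s \<in> {1..m * n}"
  then show "grid_point n s \<in> R_space (n + m - 2)"
    by (rule grid_point_in_R_space[OF assms])
next
  fix s t assume s: "s \<in> {1..m * n}" and t: "t \<in> {1..m * n}"
  show "grid_manhattan n s t = sq_dist (n + m - 2) (grid_point n s) (grid_point n t)"
    unfolding grid_point_def grid_dim_split[OF assms] sq_dist_append_vec grid_manhattan_def
    using grid_index_bounds[OF s] grid_index_bounds[OF t] by (simp add: sq_dist_unary_vec)
qed

lemma unit_vecs_subset_grid_differences:
  assumes "m \<ge> 1" and "n \<ge> 1"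
  defines "P \<equiv> grid_point n ` {1..m * n}"
  shows "unit_vec ` {..<n + m - 2} \<subseteq> {x - y | x y. x \<in> P \<and> y \<in> P}"
proof
  fix v assume "v \<in> unit_vec ` {..<n + m - 2}"
  then obtain k where k: "k < n + m - 2" and v: "v = unit_vec k" by auto
  have n_le: "n \<le> m * n" using assms by simp
  show "v \<in> {x - y | x y. x \<in> P \<and> y \<in> P}"
  proof (cases "k < n - 1")
    case True
    have "grid_point n (k + 2) - grid_point n (k + 1) = unit_vec k"
      using True unfolding grid_point_def append_vec_diff
      by (simp add: unary_vec_Suc_diff[of k, simplified] append_vec_unit_vec_left)
    moreover have "k + 2 \<le> m * n"
      using True n_le by linarith
    then have "k + 2 \<in> {1..m * n}" and "k + 1 \<in> {1..m * n}"
      by auto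
    ultimately show ?thesis
      unfolding v P_def by (metis (mono_tags, lifting) image_eqI mem_Collect_eq)
  next
    case False
    define l where "l = k - (n - 1)"
    have l: "l < m - 1" and k_eq: "k = n - 1 + l"
      using False k assms by (auto simp: l_def)
    have "grid_point n (n * (l + 1) + 1) - grid_point n (n * l + 1) = unit_vec k"
      using assms unfolding grid_point_def append_vec_diff k_eq
      by (simp add: unary_vec_Suc_diff[of l, simplified] append_vec_unit_vec_right)
    moreover have "n * (l + 2) \<le> n * m"
      using l by (intro mult_le_mono2) simp
    then have "n * (l + 1) + 1 \<in> {1..m * n}" and "n * l + 1 \<in> {1..m * n}"
      using assms(2) by (simp_all add: algebra_simps)
    ultimately show ?thesis
      unfolding v P_def by (metis (mono_tags, lifting) image_eqI mem_Collect_eq)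
  qed
qed

lemma affine_span_dim_grid_points:
  assumes "m \<ge> 1" and "n \<ge> 1"
  shows "affine_span_dim (grid_point n ` {1..m * n}) = n + m - 2"
  unfolding affine_span_dim_def
proof (rule dim_eq_if_unit_vecs_subset)
  show "unit_vec ` {..<n + m - 2} \<subseteq> {x - y |x y. x \<in> grid_point n ` {1..m * n} \<and> y \<in> grid_point n ` {1..m * n}}"
    by (rule unit_vecs_subset_grid_differences[OF assms])
  show "{x - y |x y. x \<in> grid_point n ` {1..m * n} \<and> y \<in> grid_point n ` {1..m * n}} \<subseteq> R_space (n + m - 2)"
    using grid_point_in_R_space[OF assms] by (auto intro: diff_in_R_space)
qed

lemma grid_generators_on_hypersphere:
  assumes "m \<ge> 1" and "n \<ge> 1"
    and gen: "generates_EDM (n + m - 2) (m * n) (grid_manhattan n) p"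
  shows "on_hypersphere (n + m - 2) (m * n) p (sqrt (real (n + m - 2)) / 2)"
proof -
  have "1 \<in> {1..m * n}" and "m * n \<in> {1..m * n}"
    using assms by auto
  from on_hypersphere_if_geodesic[OF gen this grid_manhattan_geodesic[OF assms(1,2)]]
  show ?thesis unfolding grid_manhattan_corners[OF assms(1,2)] .
qed

theorem corollary1:
  fixes m n :: nat
  assumes "m \<ge> 1" and "n \<ge> 1"
  shows "spherical_EDM_with_embedding_dim (n + m - 2) (m * n) (grid_manhattan n)
       \<and> (\<forall>p. generates_EDM (n + m - 2) (m * n) (grid_manhattan n) p \<longrightarrow>
              on_hypersphere (n + m - 2) (m * n) p (sqrt (real (n + m - 2)) / 2))"
proof
  show "spherical_EDM_with_embedding_dim (n + m - 2) (m * n) (grid_manhattan n)"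
    unfolding spherical_EDM_with_embedding_dim_def
    using generates_EDM_grid_point[OF assms] affine_span_dim_grid_points[OF assms]
      grid_generators_on_hypersphere[OF assms generates_EDM_grid_point[OF assms]]
    by blast
  show "\<forall>p. generates_EDM (n + m - 2) (m * n) (grid_manhattan n) p \<longrightarrow>
          on_hypersphere (n + m - 2) (m * n) p (sqrt (real (n + m - 2)) / 2)"
    using grid_generators_on_hypersphere[OF assms] by blast
qed

end
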